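(* With $f$ as defined in the context, for $b,c\in(-1,\infty)$ the quantity $f(b,c)$ is strictly decreasing in $b$ (for fixed $c$) and strictly increasing in $c$ (for fixed $b$).
   Context: Let $u_n=(-1)^{s_2(n)}$, where $s_2(n)$ is the sum of the binary digits of the non-negative integer $n$ (Thue–Morse sequence with values $\pm1$). For $b,c\in(-1,\infty)$ define $f(b,c)=\prod_{n=1}^\infty\left(\frac{n+b}{n+c}\right)^{u_n}$ (limit of partial products; it converges). *)

theory Defs
  imports "HOL-Analysis.Analysis"
begin

fun s2 :: "nat \<Rightarrow> nat" where
  "s2 n = (if n = 0 then 0 else n mod 2 + s2 (n div 2))"

declare s2.simps[simp del]

definition tm :: "nat \<Rightarrow> real" where
  "tm n = (-1) ^ s2 n"

definition f :: "real \<Rightarrow> real \<Rightarrow> real" where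
  "f b c = lim (\<lambda>N. \<Prod>n=1..N. ((real n + b) / (real n + c)) powr tm n)"

end

theory Submission
  imports Defs "HOL-Real_Asymp.Real_Asymp"
begin

text \<open>With \<open>g n = ln (n + b) - ln (n + c)\<close> we have \<open>ln f(b,c) = \<Sum>\<^sub>n u(n) g(n)\<close>, and for
  \<open>c < b\<close> the sequence \<open>g\<close> decreases to 0. Since \<open>u(2k) = -u(2k+1) = u(k)\<close>, the terms
  \<open>2k, 2k+1\<close> combine to \<open>u(k) (g(2k) - g(2k+1))\<close>, whose absolute values telescope to at most \<open>g 2\<close>;
  with the first term \<open>u(1) g(1) = -g(1)\<close> the series is at most \<open>g 2 - g 1 < 0\<close>. So \<open>f(b,c) < 1\<close>
  for \<open>c < b\<close>, and the cocycle identity \<open>f(a,c) = f(a,b) f(b,c)\<close> gives both monotonicities.\<close>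

lemma s2_0 [simp]: "s2 0 = 0"
  by (subst s2.simps) simp

lemma s2_double: "s2 (2 * k) = s2 k"
  by (cases "k = 0") (simp, subst s2.simps, simp)

lemma s2_double_Suc: "s2 (2 * k + 1) = s2 k + 1"
  by (subst s2.simps) auto

lemma tm_double: "tm (2 * k) = tm k"
  by (simp add: tm_def s2_double)

lemma tm_double_Suc: "tm (2 * k + 1) = - tm k"
  unfolding tm_def s2_double_Suc by simp

lemma tm_1: "tm 1 = -1"
  using tm_double_Suc[of 0] by (simp add: tm_def)

lemma abs_tm [simp]: "\<bar>tm n\<bar> = 1"
  by (simp add: tm_def)

lemma tm_pair_sum: "tm (2 * k) * x + tm (2 * k + 1) * y = tm k * (x - y)"
  unfolding tm_double tm_double_Suc by (simp add: algebra_simps)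

lemma tm_pair_series_bound:
  fixes g :: "nat \<Rightarrow> real"
  assumes dec: "\<And>n. n \<ge> 1 \<Longrightarrow> g (Suc n) \<le> g n" and lim: "g \<longlonglongrightarrow> 0"
  defines "r \<equiv> \<lambda>k. tm (Suc k) * (g (2 * k + 2) - g (2 * k + 3))"
  shows "summable r" and "\<bar>suminf r\<bar> \<le> g 2"
proof -
  define d where "d = (\<lambda>k. g (2 * k + 2) - g (2 * k + 4))"
  have "(\<lambda>k. g (2 * k + 2)) \<longlonglongrightarrow> 0"
    using LIMSEQ_subseq_LIMSEQ[OF lim, of "\<lambda>k. 2 * k + 2"]
    by (simp add: strict_mono_Suc_iff o_def)
  from telescope_sums'[OF this] have d_sums: "d sums g 2"
    by (simp add: d_def eval_nat_numeral)
  have abs_r_le: "\<bar>r k\<bar> \<le> d k" for k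
  proof -
    have "g (2 * k + 3) \<le> g (2 * k + 2)" "g (2 * k + 4) \<le> g (2 * k + 3)"
      using dec[of "2 * k + 2"] dec[of "2 * k + 3"] by (simp_all add: eval_nat_numeral)
    then show ?thesis by (simp add: r_def d_def abs_mult)
  qed
  have abs_summable: "summable (\<lambda>k. \<bar>r k\<bar>)"
    using sums_summable[OF d_sums] by (rule summable_comparison_test') (simp add: abs_r_le)
  then show "summable r"
    by (rule summable_rabs_cancel)
  have "\<bar>suminf r\<bar> \<le> (\<Sum>k. \<bar>r k\<bar>)"
    using summable_norm[of r] abs_summable by simp
  also have "\<dots> \<le> suminf d"
    using abs_summable sums_summable[OF d_sums] by (rule suminf_le[OF abs_r_le])
  finally show "\<bar>suminf r\<bar> \<le> g 2"
    using d_sums by (simp add: sums_iff)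
qed

lemma tm_series_decreasing_tendsto:
  fixes g :: "nat \<Rightarrow> real"
  assumes dec: "\<And>n. n \<ge> 1 \<Longrightarrow> g (Suc n) \<le> g n" and lim: "g \<longlonglongrightarrow> 0"
  shows "\<exists>L. (\<lambda>N. \<Sum>n=1..N. tm n * g n) \<longlonglongrightarrow> L \<and> L \<le> g 2 - g 1"
proof -
  define a where "a n = tm n * g n" for n
  define r where "r = (\<lambda>k. tm (Suc k) * (g (2 * k + 2) - g (2 * k + 3)))"
  define S where "S K = (\<Sum>n=1..2 * K + 1. a n)" for K
  have sr: "summable r"
    unfolding r_def by (rule tm_pair_series_bound(1)[OF dec lim])
  have bound: "\<bar>suminf r\<bar> \<le> g 2"
    unfolding r_def by (rule tm_pair_series_bound(2)[OF dec lim])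
  have S_eq: "S K = a 1 + (\<Sum>k<K. r k)" for K
  proof (induction K)
    case (Suc K)
    have "S (Suc K) = S K + (a (2 * (K + 1)) + a (2 * (K + 1) + 1))"
      by (simp add: S_def eval_nat_numeral)
    also have "a (2 * (K + 1)) + a (2 * (K + 1) + 1) = r K"
      unfolding a_def r_def tm_pair_sum by (simp add: eval_nat_numeral)
    finally show ?case using Suc by simp
  qed (simp add: S_def)
  define L where "L = a 1 + suminf r"
  have "S \<longlonglongrightarrow> L"
    unfolding S_eq L_def by (intro tendsto_add tendsto_const summable_LIMSEQ sr)
  then have S_half: "(\<lambda>N. S (N div 2)) \<longlonglongrightarrow> L"
    by (rule filterlim_compose) (rule filterlim_at_top_div_const_nat, simp)
  have a_Suc_null: "(\<lambda>N. a (Suc N)) \<longlonglongrightarrow> 0"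
    by (rule Lim_null_comparison[where g = "\<lambda>N. \<bar>g (Suc N)\<bar>"])
       (auto simp: a_def abs_mult intro: tendsto_rabs_zero LIMSEQ_Suc[OF lim])
  have err: "(\<lambda>N. if even N then a (Suc N) else 0) \<longlonglongrightarrow> 0"
    by (rule Lim_null_comparison[where g = "\<lambda>N. \<bar>a (Suc N)\<bar>"])
       (auto intro: tendsto_rabs_zero a_Suc_null)
  \<comment> \<open>a partial sum of even length lacks the last term of the next odd-length one\<close>
  have partial_sum_split: "(\<Sum>n=1..N. a n) = S (N div 2) - (if even N then a (Suc N) else 0)" for N
    by (cases "even N") (auto elim!: evenE oddE simp: S_def)
  have "(\<lambda>N. \<Sum>n=1..N. a n) \<longlonglongrightarrow> L"
    unfolding partial_sum_split using tendsto_diff[OF S_half err] by simp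
  moreover have "L \<le> g 2 - g 1"
    unfolding L_def a_def tm_1 using bound by simp
  ultimately show ?thesis
    unfolding a_def by blast
qed

definition tm_log_sum :: "real \<Rightarrow> real \<Rightarrow> nat \<Rightarrow> real" where
  "tm_log_sum b c N = (\<Sum>n=1..N. tm n * (ln (real n + b) - ln (real n + c)))"

lemma tm_log_sum_cocycle: "tm_log_sum a c N = tm_log_sum a b N + tm_log_sum b c N"
  by (simp add: tm_log_sum_def sum.distrib[symmetric] algebra_simps)

lemma tm_log_sum_same: "tm_log_sum b b = (\<lambda>_. 0)"
  by (simp add: fun_eq_iff tm_log_sum_def)

lemma tm_log_sum_swap: "tm_log_sum b c N = - tm_log_sum c b N"
  using tm_log_sum_cocycle[where a = b and b = c and c = b and N = N]
  by (simp add: tm_log_sum_same eq_neg_iff_add_eq_0)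

lemma ln_shift_diff_strict_decreasing:
  fixes b c :: real
  assumes "c > -1" "c < b" "n \<ge> 1"
  shows "ln (real (Suc n) + b) - ln (real (Suc n) + c) < ln (real n + b) - ln (real n + c)"
proof -
  have pos: "real n + c > 0" "real n + b > 0" using assms by auto
  have "(real n + 1 + b) / (real n + 1 + c) < (real n + b) / (real n + c)"
    using pos assms(2) by (simp add: field_simps)
  moreover have "ln (real (Suc n) + b) - ln (real (Suc n) + c) = ln ((real n + 1 + b) / (real n + 1 + c))"
    using pos by (simp add: ln_div add_ac)
  moreover have "ln (real n + b) - ln (real n + c) = ln ((real n + b) / (real n + c))"
    using pos by (simp add: ln_div)
  ultimately show ?thesis
    using pos by simp
qed

lemma tm_log_sum_tendsto_neg:
  assumes "c > -1" "c < b"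
  shows "\<exists>L. tm_log_sum b c \<longlonglongrightarrow> L \<and> L < 0"
proof -
  define g where "g n = ln (real n + b) - ln (real n + c)" for n
  have "\<exists>L. tm_log_sum b c \<longlonglongrightarrow> L \<and> L \<le> g 2 - g 1"
    unfolding tm_log_sum_def g_def[symmetric]
  proof (rule tm_series_decreasing_tendsto)
    show "g (Suc n) \<le> g n" if "n \<ge> 1" for n
      using ln_shift_diff_strict_decreasing[OF assms that] by (simp add: g_def)
    show "g \<longlonglongrightarrow> 0"
      unfolding g_def by real_asymp
  qed
  moreover have "g 2 < g 1"
    using ln_shift_diff_strict_decreasing[OF assms, of 1] by (simp add: g_def numeral_2_eq_2)
  ultimately show ?thesis by force
qed

lemma lim_tm_log_sum_neg:
  assumes "c > -1" "c < b"
  shows "lim (tm_log_sum b c) < 0"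
  using tm_log_sum_tendsto_neg[OF assms] limI by fastforce

lemma convergent_tm_log_sum:
  assumes "b > -1" "c > -1"
  shows "convergent (tm_log_sum b c)"
proof (cases b c rule: linorder_cases)
  case less
  then obtain L where "tm_log_sum c b \<longlonglongrightarrow> L"
    using tm_log_sum_tendsto_neg[OF assms(1)] by blast
  then have "(\<lambda>N. - tm_log_sum c b N) \<longlonglongrightarrow> - L"
    by (rule tendsto_minus)
  moreover have "tm_log_sum b c = (\<lambda>N. - tm_log_sum c b N)"
    using tm_log_sum_swap[of b c] by blast
  ultimately show ?thesis
    by (auto simp: convergent_def)
qed (use tm_log_sum_tendsto_neg[OF assms(2)] in \<open>auto simp: convergent_def tm_log_sum_same\<close>)

lemma lim_tm_log_sum_cocycle:
  assumes "a > -1" "b > -1" "c > -1"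
  shows "lim (tm_log_sum a c) = lim (tm_log_sum a b) + lim (tm_log_sum b c)"
proof -
  have "(\<lambda>N. tm_log_sum a b N + tm_log_sum b c N)
          \<longlonglongrightarrow> lim (tm_log_sum a b) + lim (tm_log_sum b c)"
    using convergent_tm_log_sum[OF assms(1,2)] convergent_tm_log_sum[OF assms(2,3)]
    by (intro tendsto_add) (simp_all add: convergent_LIMSEQ_iff)
  then show ?thesis
    by (simp add: limI flip: tm_log_sum_cocycle)
qed

lemma f_eq_exp_lim_tm_log_sum:
  assumes "b > -1" "c > -1"
  shows "f b c = exp (lim (tm_log_sum b c))"
proof -
  have "(\<Prod>n=1..N. ((real n + b) / (real n + c)) powr tm n) = exp (tm_log_sum b c N)" for N
  proof -
    have "((real n + b) / (real n + c)) powr tm n = exp (tm n * (ln (real n + b) - ln (real n + c)))"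
      if "n \<in> {1..N}" for n
      using that assms by (simp add: powr_def ln_div)
    then show ?thesis
      by (simp add: tm_log_sum_def exp_sum)
  qed
  moreover have "(\<lambda>N. exp (tm_log_sum b c N)) \<longlonglongrightarrow> exp (lim (tm_log_sum b c))"
    using convergent_tm_log_sum[OF assms] by (intro tendsto_exp) (simp add: convergent_LIMSEQ_iff)
  ultimately show ?thesis
    unfolding f_def by (simp add: limI)
qed

theorem theorem2:
  shows "(\<forall>c > -1. \<forall>b1 > -1. \<forall>b2 > -1. b1 < b2 \<longrightarrow> f b2 c < f b1 c) \<and>
         (\<forall>b > -1. \<forall>c1 > -1. \<forall>c2 > -1. c1 < c2 \<longrightarrow> f b c1 < f b c2)"
proof (intro conjI allI impI)
  fix c b1 b2 :: real
  assume "c > -1" "b1 > -1" "b2 > -1" "b1 < b2"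
  then show "f b2 c < f b1 c"
    using lim_tm_log_sum_cocycle[of b2 b1 c] lim_tm_log_sum_neg[of b1 b2]
    by (simp add: f_eq_exp_lim_tm_log_sum)
next
  fix b c1 c2 :: real
  assume "b > -1" "c1 > -1" "c2 > -1" "c1 < c2"
  then show "f b c1 < f b c2"
    using lim_tm_log_sum_cocycle[of b c2 c1] lim_tm_log_sum_neg[of c1 c2]
    by (simp add: f_eq_exp_lim_tm_log_sum)
qed

end
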